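(* There is a constant $c>0$ such that for every formula $\phi$ in $\mathsf F(\mathrm{LTL}[\mathsf O])$ there is a deterministic Büchi automaton for $\mathcal L^\omega(\phi)$ with at most $2^{c\cdot\mathrm{size}(\phi)}$ states.
   Context: Let $AP$ be a finite set of atomic propositions and $\Sigma=2^{AP}$. Formulae of $\mathrm{LTL}[\mathsf O]$ are built from literals $p,\neg p$ ($p\in AP$) with $\land,\lor$ and the operator $\mathsf O$; $\mathsf F(\mathrm{LTL}[\mathsf O])$ consists of formulae $\mathsf F(\alpha)$ with $\alpha\in\mathrm{LTL}[\mathsf O]$. Semantics on infinite traces $\sigma\in\Sigma^\omega$ at positions $i\in\mathbb N$: literals/Booleans as usual; $\mathsf F\phi$: $\phi$ holds at some $j\ge i$; $\mathsf O\phi$: $\phi$ holds at some $0\le j\le i$; $\mathcal L^\omega(\phi)=\{\sigma\in\Sigma^\omega:\sigma,0\models\phi\}$. Size: literals 1, unary operators add 1, binary connectives sum plus 1. A deterministic Büchi automaton is $(Q,\Sigma,\delta,q_0,F)$ with finite $Q$, total $\delta:Q\times\Sigma\to Q$, initial $q_0$, accepting $F\subseteq Q$; it accepts $\sigma\in\Sigma^\omega$ iff its run visits $F$ infinitely often. *)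

theory Defs
  imports Complex_Main
begin

text \<open>Formulas over atomic propositions of type 'a: literals, conjunction,
  disjunction, the past operator O (once) and the future operator F.\<close>
datatype 'a ltl =
    Prop 'a
  | NProp 'a
  | And "'a ltl" "'a ltl"
  | Or "'a ltl" "'a ltl"
  | Once "'a ltl"
  | Ev "'a ltl"

fun is_ltlO :: "'a ltl \<Rightarrow> bool" where
  "is_ltlO (Prop p) = True"
| "is_ltlO (NProp p) = True"
| "is_ltlO (And a b) = (is_ltlO a \<and> is_ltlO b)"
| "is_ltlO (Or a b) = (is_ltlO a \<and> is_ltlO b)"
| "is_ltlO (Once a) = is_ltlO a"
| "is_ltlO (Ev a) = False"

definition is_F_ltlO :: "'a ltl \<Rightarrow> bool" where
  "is_F_ltlO \<phi> = (\<exists>\<alpha>. \<phi> = Ev \<alpha> \<and> is_ltlO \<alpha>)"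

fun atoms :: "'a ltl \<Rightarrow> 'a set" where
  "atoms (Prop p) = {p}"
| "atoms (NProp p) = {p}"
| "atoms (And a b) = atoms a \<union> atoms b"
| "atoms (Or a b) = atoms a \<union> atoms b"
| "atoms (Once a) = atoms a"
| "atoms (Ev a) = atoms a"

fun fsize :: "'a ltl \<Rightarrow> nat" where
  "fsize (Prop p) = 1"
| "fsize (NProp p) = 1"
| "fsize (And a b) = fsize a + fsize b + 1"
| "fsize (Or a b) = fsize a + fsize b + 1"
| "fsize (Once a) = fsize a + 1"
| "fsize (Ev a) = fsize a + 1"

fun sat :: "(nat \<Rightarrow> 'a set) \<Rightarrow> nat \<Rightarrow> 'a ltl \<Rightarrow> bool" where
  "sat \<sigma> i (Prop p) = (p \<in> \<sigma> i)"
| "sat \<sigma> i (NProp p) = (p \<notin> \<sigma> i)"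
| "sat \<sigma> i (And a b) = (sat \<sigma> i a \<and> sat \<sigma> i b)"
| "sat \<sigma> i (Or a b) = (sat \<sigma> i a \<or> sat \<sigma> i b)"
| "sat \<sigma> i (Once a) = (\<exists>j\<le>i. sat \<sigma> j a)"
| "sat \<sigma> i (Ev a) = (\<exists>j\<ge>i. sat \<sigma> j a)"

definition words :: "'a set \<Rightarrow> (nat \<Rightarrow> 'a set) set" where
  "words AP = {\<sigma>. \<forall>i. \<sigma> i \<subseteq> AP}"

definition lang :: "'a set \<Rightarrow> 'a ltl \<Rightarrow> (nat \<Rightarrow> 'a set) set" where
  "lang AP \<phi> = {\<sigma> \<in> words AP. sat \<sigma> 0 \<phi>}"

definition is_DBA :: "'a set \<Rightarrow> nat set \<Rightarrow> (nat \<Rightarrow> 'a set \<Rightarrow> nat) \<Rightarrow> nat \<Rightarrow> nat set \<Rightarrow> bool" where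
  "is_DBA AP Q \<delta> q0 F =
     (finite Q \<and> q0 \<in> Q \<and> F \<subseteq> Q \<and> (\<forall>q\<in>Q. \<forall>a. a \<subseteq> AP \<longrightarrow> \<delta> q a \<in> Q))"

fun run :: "(nat \<Rightarrow> 'a set \<Rightarrow> nat) \<Rightarrow> nat \<Rightarrow> (nat \<Rightarrow> 'a set) \<Rightarrow> nat \<Rightarrow> nat" where
  "run \<delta> q0 \<sigma> 0 = q0"
| "run \<delta> q0 \<sigma> (Suc i) = \<delta> (run \<delta> q0 \<sigma> i) (\<sigma> i)"

definition dba_lang :: "'a set \<Rightarrow> (nat \<Rightarrow> 'a set \<Rightarrow> nat) \<Rightarrow> nat \<Rightarrow> nat set \<Rightarrow> (nat \<Rightarrow> 'a set) set" where
  "dba_lang AP \<delta> q0 F = {\<sigma> \<in> words AP. \<exists>\<^sub>\<infinity>i. run \<delta> q0 \<sigma> i \<in> F}"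

end

theory Submission
  imports Defs "HOL-Library.Infinite_Set"
begin

text \<open>For \<open>F \<alpha>\<close> with \<open>\<alpha>\<close> a pure past formula, a deterministic automaton can track the set of
  subformulas of \<open>\<alpha>\<close> that have held at some earlier position: this set determines the truth
  value of every subformula at the current position, so it can be updated letter by letter.
  The trace satisfies \<open>F \<alpha>\<close> iff \<open>\<alpha>\<close> eventually enters the set, after which it stays there, so
  accepting the states containing \<open>\<alpha>\<close> gives a Buechi condition. There are at most
  \<open>2^fsize \<alpha>\<close> such sets.\<close>

fun subformulas :: "'a ltl \<Rightarrow> 'a ltl set" where
  "subformulas (Prop p) = {Prop p}"
| "subformulas (NProp p) = {NProp p}"
| "subformulas (And a b) = insert (And a b) (subformulas a \<union> subformulas b)"
| "subformulas (Or a b) = insert (Or a b) (subformulas a \<union> subformulas b)"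
| "subformulas (Once a) = insert (Once a) (subformulas a)"
| "subformulas (Ev a) = insert (Ev a) (subformulas a)"

lemma finite_subformulas: "finite (subformulas \<phi>)"
  by (induction \<phi>) auto

lemma subformulas_refl: "\<phi> \<in> subformulas \<phi>"
  by (cases \<phi>) auto

lemma subformulas_trans: "\<psi> \<in> subformulas \<phi> \<Longrightarrow> subformulas \<psi> \<subseteq> subformulas \<phi>"
  by (induction \<phi>) auto

lemma is_ltlO_subformula: "\<psi> \<in> subformulas \<phi> \<Longrightarrow> is_ltlO \<phi> \<Longrightarrow> is_ltlO \<psi>"
  by (induction \<phi>) auto

lemma card_subformulas_le_fsize: "card (subformulas \<phi>) \<le> fsize \<phi>"
  by (induction \<phi>)
    (auto simp: card_insert_if finite_subformulas intro!: le_trans[OF card_Un_le] add_mono)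

text \<open>Truth of a past formula at the current position, given the current letter and the set
  \<open>S\<close> of subformulas that held at some strictly earlier position.\<close>
fun sat_now :: "'a ltl set \<Rightarrow> 'a set \<Rightarrow> 'a ltl \<Rightarrow> bool" where
  "sat_now S a (Prop p) = (p \<in> a)"
| "sat_now S a (NProp p) = (p \<notin> a)"
| "sat_now S a (And x y) = (sat_now S a x \<and> sat_now S a y)"
| "sat_now S a (Or x y) = (sat_now S a x \<or> sat_now S a y)"
| "sat_now S a (Once x) = (x \<in> S \<or> sat_now S a x)"
| "sat_now S a (Ev x) = False"

definition seen_before :: "'a ltl \<Rightarrow> (nat \<Rightarrow> 'a set) \<Rightarrow> nat \<Rightarrow> 'a ltl set" where
  "seen_before \<alpha> \<sigma> i = {\<chi> \<in> subformulas \<alpha>. \<exists>j<i. sat \<sigma> j \<chi>}"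

lemma sat_now_seen_before:
  assumes "is_ltlO \<alpha>" and "\<psi> \<in> subformulas \<alpha>"
  shows "sat_now (seen_before \<alpha> \<sigma> i) (\<sigma> i) \<psi> = sat \<sigma> i \<psi>"
  using assms(2) is_ltlO_subformula[OF assms(2,1)]
proof (induction \<psi>)
  case (Once x)
  then have "x \<in> subformulas \<alpha>"
    using subformulas_trans subformulas_refl by fastforce
  with Once show ?case
    using subformulas_trans[OF Once.prems(1)] by (auto simp: seen_before_def le_less)
qed (use subformulas_trans subformulas_refl in fastforce)+

definition seen_step :: "'a ltl \<Rightarrow> 'a ltl set \<Rightarrow> 'a set \<Rightarrow> 'a ltl set" where
  "seen_step \<alpha> S a = S \<union> {\<psi> \<in> subformulas \<alpha>. sat_now S a \<psi>}"

lemma seen_before_Suc: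
  assumes "is_ltlO \<alpha>"
  shows "seen_before \<alpha> \<sigma> (Suc i) = seen_step \<alpha> (seen_before \<alpha> \<sigma> i) (\<sigma> i)"
  using sat_now_seen_before[OF assms] less_Suc_eq
  by (auto simp: seen_step_def seen_before_def)

fun state_run :: "('s \<Rightarrow> 'b \<Rightarrow> 's) \<Rightarrow> 's \<Rightarrow> (nat \<Rightarrow> 'b) \<Rightarrow> nat \<Rightarrow> 's" where
  "state_run \<delta> init \<sigma> 0 = init"
| "state_run \<delta> init \<sigma> (Suc i) = \<delta> (state_run \<delta> init \<sigma> i) (\<sigma> i)"

lemma state_run_closed:
  assumes "init \<in> S" and "\<And>s a. s \<in> S \<Longrightarrow> a \<subseteq> AP \<Longrightarrow> \<delta> s a \<in> S" and "\<sigma> \<in> words AP"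
  shows "state_run \<delta> init \<sigma> i \<in> S"
  using assms by (induction i) (auto simp: words_def)

lemma DBA_of_finite_states:
  fixes \<delta> :: "'s \<Rightarrow> 'a set \<Rightarrow> 's"
  assumes "finite S" and "init \<in> S" and "A \<subseteq> S"
    and closed: "\<And>s a. s \<in> S \<Longrightarrow> a \<subseteq> AP \<Longrightarrow> \<delta> s a \<in> S"
  shows "\<exists>Q \<delta>' q0 F. is_DBA AP Q \<delta>' q0 F \<and> card Q = card S \<and>
           dba_lang AP \<delta>' q0 F = {\<sigma> \<in> words AP. \<exists>\<^sub>\<infinity>i. state_run \<delta> init \<sigma> i \<in> A}"
proof -
  obtain f :: "'s \<Rightarrow> nat" where "inj_on f S"
    using ex_bij_betw_finite_nat[OF \<open>finite S\<close>] bij_betw_imp_inj_on by blast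
  define \<delta>' where "\<delta>' = (\<lambda>n a. f (\<delta> (inv_into S f n) a))"
  have inv_f: "inv_into S f (f s) = s" if "s \<in> S" for s
    using inv_into_f_f[OF \<open>inj_on f S\<close> that] .
  have "is_DBA AP (f ` S) \<delta>' (f init) (f ` A)"
    using assms inv_f by (auto simp: is_DBA_def \<delta>'_def)
  moreover have "card (f ` S) = card S"
    using card_image[OF \<open>inj_on f S\<close>] .
  moreover have "run \<delta>' (f init) \<sigma> i \<in> f ` A \<longleftrightarrow> state_run \<delta> init \<sigma> i \<in> A"
    if "\<sigma> \<in> words AP" for \<sigma> i
  proof -
    have in_S: "state_run \<delta> init \<sigma> k \<in> S" for k
      using state_run_closed[OF \<open>init \<in> S\<close> closed that] .
    have "run \<delta>' (f init) \<sigma> k = f (state_run \<delta> init \<sigma> k)" for k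
      by (induction k) (simp_all add: \<delta>'_def inv_f in_S)
    then show ?thesis
      using inj_on_image_mem_iff[OF \<open>inj_on f S\<close> in_S \<open>A \<subseteq> S\<close>] by simp
  qed
  then have "dba_lang AP \<delta>' (f init) (f ` A) = {\<sigma> \<in> words AP. \<exists>\<^sub>\<infinity>i. state_run \<delta> init \<sigma> i \<in> A}"
    unfolding dba_lang_def by auto
  ultimately show ?thesis by blast
qed

lemma INFM_ex_less_iff: "(\<exists>\<^sub>\<infinity>i::nat. \<exists>j<i. P j) \<longleftrightarrow> (\<exists>j. P j)"
proof
  assume "\<exists>j. P j"
  then obtain j where "P j" ..
  show "\<exists>\<^sub>\<infinity>i. \<exists>j<i. P j"
    unfolding INFM_nat
  proof
    fix m
    show "\<exists>n>m. \<exists>j<n. P j"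
      using \<open>P j\<close> by (intro exI[of _ "Suc (m + j)"]) (auto intro!: exI[of _ j])
  qed
qed (use frequently_ex in blast)

lemma Ev_ltlO_DBA:
  assumes "is_ltlO \<alpha>"
  shows "\<exists>Q \<delta> q0 F. is_DBA AP Q \<delta> q0 F \<and> dba_lang AP \<delta> q0 F = lang AP (Ev \<alpha>) \<and>
           card Q \<le> 2 ^ fsize \<alpha>"
proof -
  let ?S = "Pow (subformulas \<alpha>)" and ?A = "{S \<in> Pow (subformulas \<alpha>). \<alpha> \<in> S}"
  have "\<exists>Q \<delta> q0 F. is_DBA AP Q \<delta> q0 F \<and> card Q = card ?S \<and>
      dba_lang AP \<delta> q0 F = {\<sigma> \<in> words AP. \<exists>\<^sub>\<infinity>i. state_run (seen_step \<alpha>) {} \<sigma> i \<in> ?A}"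
    by (rule DBA_of_finite_states) (auto simp: finite_subformulas seen_step_def)
  then obtain Q \<delta> q0 F where DBA: "is_DBA AP Q \<delta> q0 F" and "card Q = card ?S"
    and lang: "dba_lang AP \<delta> q0 F = {\<sigma> \<in> words AP. \<exists>\<^sub>\<infinity>i. state_run (seen_step \<alpha>) {} \<sigma> i \<in> ?A}"
    by blast
  have "state_run (seen_step \<alpha>) {} \<sigma> i = seen_before \<alpha> \<sigma> i" for \<sigma> i
    by (induction i) (simp_all add: seen_before_Suc[OF assms], simp add: seen_before_def)
  then have "(\<exists>\<^sub>\<infinity>i. state_run (seen_step \<alpha>) {} \<sigma> i \<in> ?A) \<longleftrightarrow> sat \<sigma> 0 (Ev \<alpha>)" for \<sigma>
    using INFM_ex_less_iff[of "\<lambda>j. sat \<sigma> j \<alpha>"] subformulas_refl[of \<alpha>]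
    by (simp add: seen_before_def)
  with lang have "dba_lang AP \<delta> q0 F = lang AP (Ev \<alpha>)"
    unfolding lang_def by simp
  moreover have "card Q \<le> 2 ^ fsize \<alpha>"
    using \<open>card Q = card ?S\<close> card_subformulas_le_fsize[of \<alpha>]
    by (simp add: card_Pow finite_subformulas power_increasing)
  ultimately show ?thesis
    using DBA by blast
qed

theorem lemma8:
  "\<exists>c::real. c > 0 \<and>
     (\<forall>(AP :: 'a set) (\<phi> :: 'a ltl). finite AP \<longrightarrow> atoms \<phi> \<subseteq> AP \<longrightarrow> is_F_ltlO \<phi> \<longrightarrow>
        (\<exists>Q \<delta> q0 F. is_DBA AP Q \<delta> q0 F \<and> dba_lang AP \<delta> q0 F = lang AP \<phi> \<and>
            real (card Q) \<le> 2 powr (c * real (fsize \<phi>))))"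
proof (intro exI[of _ 1] conjI allI impI)
  fix AP :: "'a set" and \<phi> :: "'a ltl"
  assume "is_F_ltlO \<phi>"
  then obtain \<alpha> where \<phi>: "\<phi> = Ev \<alpha>" and "is_ltlO \<alpha>"
    unfolding is_F_ltlO_def by auto
  then obtain Q \<delta> q0 F where "is_DBA AP Q \<delta> q0 F" "dba_lang AP \<delta> q0 F = lang AP \<phi>"
    and "card Q \<le> 2 ^ fsize \<alpha>"
    using Ev_ltlO_DBA by blast
  moreover have "real (card Q) \<le> 2 powr (1 * real (fsize \<phi>))"
  proof -
    have "card Q \<le> (2::nat) ^ fsize \<phi>"
      using \<open>card Q \<le> 2 ^ fsize \<alpha>\<close> \<phi> by (simp add: le_trans)
    then show ?thesis
      by (simp add: powr_realpow flip: of_nat_le_iff)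
  qed
  ultimately show "\<exists>Q \<delta> q0 F. is_DBA AP Q \<delta> q0 F \<and> dba_lang AP \<delta> q0 F = lang AP \<phi> \<and>
      real (card Q) \<le> 2 powr (1 * real (fsize \<phi>))"
    by blast
qed simp

end
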